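(* For each $m\geq1$, $\mathrm{Aut}_m(H)$ is a normal subgroup of $\mathrm{Aut}_c(H)$. Moreover, $\mathrm{Aut}_0(H)\supseteq\mathrm{Aut}_1(H)\supseteq\mathrm{Aut}_2(H)\supseteq\cdots$.
   Context: Let $k$ be a field and $0\neq q\in k$ not a root of unity. $H=k_q[x,x^{-1},y]$ is the $k$-algebra generated by $x,x^{-1},y$ with $xx^{-1}=x^{-1}x=1$, $yx=qxy$, a Hopf algebra with $\Delta(x)=x\otimes x$, $\Delta(x^{-1})=x^{-1}\otimes x^{-1}$, $\Delta(y)=y\otimes x+1\otimes y$, $\varepsilon(x)=1$, $\varepsilon(y)=0$; $\{x^ny^m:n\in\mathbb{Z},m\in\mathbb{N}\}$ is a $k$-basis. $H_0=\mathrm{span}\{x^n\}$, $H(m)=H_0y^m$. $\mathrm{Aut}_c(H)$ is the group under composition of coalgebra automorphisms of $H$; $\mathrm{Aut}_0(H)=\{\phi\in\mathrm{Aut}_c(H):\phi(1)=1\}$; for $m\geq1$, $\mathrm{Aut}_m(H)=\{\phi\in\mathrm{Aut}_c(H):\phi(h)=h\text{ for all }h\in\sum_{i=0}^mH(i)\}$. *)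

theory Defs
  imports "HOL-Algebra.Algebra"
begin

text \<open>Model of H = k_q[x,x^{-1},y]: an element is the coefficient function on the
basis x^n y^m, indexed by (n,m) :: int \<times> nat, with finite support.
Elements of H \<otimes> H are coefficient functions on pairs of basis indices.\<close>

type_synonym idx = "int \<times> nat"
type_synonym 'k hq = "idx \<Rightarrow> 'k"
type_synonym 'k hq2 = "idx \<times> idx \<Rightarrow> 'k"

definition supp :: "('a \<Rightarrow> 'k::zero) \<Rightarrow> 'a set" where
  "supp f = {b. f b \<noteq> 0}"

definition Hsp :: "'k::zero hq set" where
  "Hsp = {f. finite (supp f)}"

definition bas :: "idx \<Rightarrow> 'k::{zero,one} hq" where
  "bas b = (\<lambda>c. if c = b then 1 else 0)"

definition tbas :: "idx \<Rightarrow> idx \<Rightarrow> 'k::{zero,one} hq2" where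
  "tbas b1 b2 = (\<lambda>c. if c = (b1, b2) then 1 else 0)"

definition iadd :: "idx \<Rightarrow> idx \<Rightarrow> idx" where
  "iadd b d = (fst b + fst d, snd b + snd d)"

text \<open>twist factor: (x^a y^b)(x^c y^d) = q^(b c) x^(a+c) y^(b+d), from y x = q x y\<close>
definition tw :: "'k::field \<Rightarrow> idx \<Rightarrow> idx \<Rightarrow> 'k" where
  "tw q b d = q powi (int (snd b) * fst d)"

definition tmul :: "'k::field \<Rightarrow> 'k hq2 \<Rightarrow> 'k hq2 \<Rightarrow> 'k hq2" where
  "tmul q S T = (\<lambda>(c1, c2). \<Sum>(b1, b2)\<in>supp S. \<Sum>(d1, d2)\<in>supp T.
      if iadd b1 d1 = c1 \<and> iadd b2 d2 = c2
      then S (b1, b2) * T (d1, d2) * tw q b1 d1 * tw q b2 d2 else 0)"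

fun tpow :: "'k::field \<Rightarrow> 'k hq2 \<Rightarrow> nat \<Rightarrow> 'k hq2" where
  "tpow q S 0 = tbas (0, 0) (0, 0)"
| "tpow q S (Suc m) = tmul q (tpow q S m) S"

text \<open>\<Delta>(x^n y^m) = \<Delta>(x)^n \<Delta>(y)^m = (x^n \<otimes> x^n)(y \<otimes> x + 1 \<otimes> y)^m\<close>
definition Dbas :: "'k::field \<Rightarrow> idx \<Rightarrow> 'k hq2" where
  "Dbas q b = tmul q (tbas (fst b, 0) (fst b, 0))
      (tpow q (\<lambda>c. tbas (0, 1) (1, 0) c + tbas (0, 0) (0, 1) c) (snd b))"

definition Delta :: "'k::field \<Rightarrow> 'k hq \<Rightarrow> 'k hq2" where
  "Delta q f = (\<lambda>c. \<Sum>b\<in>supp f. f b * Dbas q b c)"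

text \<open>counit: \<epsilon>(x^n y^m) = 1^n 0^m\<close>
definition eps :: "'k::field hq \<Rightarrow> 'k" where
  "eps f = (\<Sum>b\<in>supp f. f b * 0 ^ snd b)"

definition tmap :: "('k::field hq \<Rightarrow> 'k hq) \<Rightarrow> 'k hq2 \<Rightarrow> 'k hq2" where
  "tmap \<phi> T = (\<lambda>(c1, c2). \<Sum>(b1, b2)\<in>supp T. T (b1, b2) * \<phi> (bas b1) c1 * \<phi> (bas b2) c2)"

definition klinear :: "('k::field hq \<Rightarrow> 'k hq) \<Rightarrow> bool" where
  "klinear \<phi> \<longleftrightarrow> (\<forall>f\<in>Hsp. \<forall>g\<in>Hsp. \<phi> (\<lambda>b. f b + g b) = (\<lambda>b. \<phi> f b + \<phi> g b))
                 \<and> (\<forall>f\<in>Hsp. \<forall>a. \<phi> (\<lambda>b. a * f b) = (\<lambda>b. a * \<phi> f b))"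

definition Autc :: "'k::field \<Rightarrow> ('k hq \<Rightarrow> 'k hq) set" where
  "Autc q = {\<phi>. \<phi> \<in> Bij Hsp \<and> klinear \<phi>
              \<and> (\<forall>f\<in>Hsp. Delta q (\<phi> f) = tmap \<phi> (Delta q f))
              \<and> (\<forall>f\<in>Hsp. eps (\<phi> f) = eps f)}"

definition AutcGroup :: "'k::field \<Rightarrow> ('k hq \<Rightarrow> 'k hq) monoid" where
  "AutcGroup q = BijGroup Hsp \<lparr>carrier := Autc q\<rparr>"

definition Aut0 :: "'k::field \<Rightarrow> ('k hq \<Rightarrow> 'k hq) set" where
  "Aut0 q = {\<phi>\<in>Autc q. \<phi> (bas (0, 0)) = bas (0, 0)}"

text \<open>\<Sum>_{i\<le>m} H(i): elements with all y-degrees \<le> m\<close>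
definition Hle :: "nat \<Rightarrow> 'k::field hq set" where
  "Hle m = {f\<in>Hsp. \<forall>b. m < snd b \<longrightarrow> f b = 0}"

definition Autm :: "'k::field \<Rightarrow> nat \<Rightarrow> ('k hq \<Rightarrow> 'k hq) set" where
  "Autm q m = {\<phi>\<in>Autc q. \<forall>h\<in>Hle m. \<phi> h = h}"

end

theory Submission
  imports Defs
begin

text \<open>\<open>Aut\<^sub>m(H)\<close> is the pointwise stabilizer of \<open>\<Sum>\<^sub>i\<^sub>\<le>\<^sub>m H(i)\<close> inside
  \<open>Aut\<^sub>c(H)\<close>, so it is normal once every coalgebra automorphism \<open>\<phi>\<close> maps this subspace
  into itself. That is shown on basis elements by induction on the y-degree, comparing the
  coefficients of \<open>\<Delta>(\<phi>(h)) = (\<phi> \<otimes> \<phi>)(\<Delta>(h))\<close> at a term built from a top-degree term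
  \<open>x\<^sup>a y\<^sup>d\<close> of \<open>\<phi>(h)\<close>. For \<open>h = x\<^sup>n\<close> the right side is \<open>\<phi>(x\<^sup>n) \<otimes> \<phi>(x\<^sup>n)\<close>, which contains
  \<open>x\<^sup>a y\<^sup>d \<otimes> x\<^sup>a y\<^sup>d\<close>, of total y-degree \<open>2d\<close>; the coproduct never raises the total
  y-degree, so \<open>d = 0\<close>. For \<open>h = x\<^sup>n y\<^sup>m\<^sup>+\<^sup>1\<close> and \<open>d = k + 1 > m + 1\<close>, the left side has the
  coefficient of \<open>x\<^sup>a y\<^sup>d\<close> times the q-integer \<open>[k+1]\<^sub>q \<noteq> 0\<close> at \<open>x\<^sup>a y \<otimes> x\<^sup>a\<^sup>+\<^sup>1 y\<^sup>k\<close>, while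
  the right side is a sum of \<open>\<phi>(x\<^sup>n y\<^sup>i) \<otimes> \<phi>(x\<^sup>n\<^sup>+\<^sup>i y\<^sup>m\<^sup>+\<^sup>1\<^sup>-\<^sup>i)\<close> whose left factor has
  y-degree 0 when \<open>i = 0\<close> and whose right factor has y-degree at most \<open>m < k\<close> otherwise.\<close>

section \<open>Normality of pointwise stabilizers\<close>

lemma normal_pointwise_stabilizer:
  assumes K: "subgroup K (BijGroup A)" and S: "S \<subseteq> A"
    and invariant: "\<And>\<phi> s. \<phi> \<in> K \<Longrightarrow> s \<in> S \<Longrightarrow> \<phi> s \<in> S"
  shows "{\<phi> \<in> K. \<forall>s\<in>S. \<phi> s = s} \<lhd> BijGroup A\<lparr>carrier := K\<rparr>"
proof -
  let ?G = "BijGroup A\<lparr>carrier := K\<rparr>"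
  let ?N = "{\<phi> \<in> K. \<forall>s\<in>S. \<phi> s = s}"
  interpret Bij: group "BijGroup A" by (rule group_BijGroup)
  interpret G: group ?G by (rule Bij.subgroup_imp_group[OF K])
  have Bij: "\<phi> \<in> Bij A" if "\<phi> \<in> K" for \<phi>
    using subgroup.subset[OF K] that by (auto simp: BijGroup_def)
  have mult: "\<phi> \<otimes>\<^bsub>?G\<^esub> \<psi> = compose A \<phi> \<psi>" if "\<phi> \<in> K" "\<psi> \<in> K" for \<phi> \<psi>
    using Bij[OF that(1)] Bij[OF that(2)] by (simp add: BijGroup_def)
  have inv: "inv\<^bsub>?G\<^esub> \<phi> = (\<lambda>x\<in>A. inv_into A \<phi> x)" if "\<phi> \<in> K" for \<phi>
    using Bij.m_inv_consistent[OF K that] inv_BijGroup[OF Bij[OF that]] by simp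
  have inv_S: "(inv\<^bsub>?G\<^esub> \<phi>) s \<in> S" if "\<phi> \<in> K" "s \<in> S" for \<phi> s
    using invariant[of "inv\<^bsub>?G\<^esub> \<phi>" s] G.inv_closed that by simp
  have inv_cancel: "\<phi> ((inv\<^bsub>?G\<^esub> \<phi>) s) = s" if "\<phi> \<in> K" "s \<in> S" for \<phi> s
    using Bij[OF that(1)] that S inv[OF that(1)] by (auto simp: Bij_def bij_betw_def f_inv_into_f)
  show ?thesis
    unfolding G.normal_inv_iff
  proof (intro conjI ballI)
    show "subgroup ?N ?G"
    proof (rule G.subgroupI)
      show "?N \<subseteq> carrier ?G" by auto
      have "(\<lambda>x\<in>A. x) \<in> K"
        using subgroup.one_closed[OF K] by (simp add: BijGroup_def)
      then have "(\<lambda>x\<in>A. x) \<in> ?N"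
        using S by auto
      then show "?N \<noteq> {}" by blast
    next
      fix \<phi> assume "\<phi> \<in> ?N"
      then have "\<phi> \<in> K" and fixes_S: "\<And>s. s \<in> S \<Longrightarrow> \<phi> s = s" by auto
      have "(inv\<^bsub>?G\<^esub> \<phi>) s = s" if "s \<in> S" for s
        using inv_cancel[OF \<open>\<phi> \<in> K\<close> that] fixes_S[OF inv_S[OF \<open>\<phi> \<in> K\<close> that]] by simp
      then show "inv\<^bsub>?G\<^esub> \<phi> \<in> ?N"
        using G.inv_closed \<open>\<phi> \<in> K\<close> by simp
    next
      fix \<phi> \<psi> assume "\<phi> \<in> ?N" "\<psi> \<in> ?N"
      then show "\<phi> \<otimes>\<^bsub>?G\<^esub> \<psi> \<in> ?N"
        using mult S G.m_closed by (simp add: compose_def subset_iff)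
    qed
  next
    fix \<xi> \<phi> assume "\<xi> \<in> carrier ?G" and \<phi>: "\<phi> \<in> ?N"
    then have \<xi>: "\<xi> \<in> K" by simp
    have "\<xi> \<otimes>\<^bsub>?G\<^esub> \<phi> \<otimes>\<^bsub>?G\<^esub> inv\<^bsub>?G\<^esub> \<xi> \<in> K"
      using \<xi> \<phi> G.m_closed G.inv_closed by simp
    moreover have "\<xi> \<otimes>\<^bsub>?G\<^esub> \<phi> \<otimes>\<^bsub>?G\<^esub> inv\<^bsub>?G\<^esub> \<xi> = compose A (compose A \<xi> \<phi>) (inv\<^bsub>?G\<^esub> \<xi>)"
      using \<xi> \<phi> mult G.m_closed G.inv_closed by simp
    moreover have "compose A (compose A \<xi> \<phi>) (inv\<^bsub>?G\<^esub> \<xi>) s = s" if "s \<in> S" for s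
      using that \<phi> \<xi> S inv_S inv_cancel by (auto simp: compose_def)
    ultimately show "\<xi> \<otimes>\<^bsub>?G\<^esub> \<phi> \<otimes>\<^bsub>?G\<^esub> inv\<^bsub>?G\<^esub> \<xi> \<in> ?N"
      by simp
  qed
qed

section \<open>The coproduct on basis elements\<close>

lemma tmul_apply:
  "tmul q S T c = (\<Sum>p\<in>supp S. \<Sum>r\<in>supp T.
     if iadd (fst p) (fst r) = fst c \<and> iadd (snd p) (snd r) = snd c
     then S p * T r * tw q (fst p) (fst r) * tw q (snd p) (snd r) else 0)"
  unfolding tmul_def split_def prod.collapse ..

lemma finite_supp_tmul: "finite (supp (tmul q S T))"
proof (cases "finite (supp S) \<and> finite (supp T)")
  case True
  let ?I = "(\<lambda>(p, r). (iadd (fst p) (fst r), iadd (snd p) (snd r))) ` (supp S \<times> supp T)"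
  have "supp (tmul q S T) \<subseteq> ?I"
  proof
    fix c assume c: "c \<in> supp (tmul q S T)"
    show "c \<in> ?I"
    proof (rule ccontr)
      assume "c \<notin> ?I"
      then have "tmul q S T c = 0" unfolding tmul_apply
        by (intro sum.neutral ballI) force
      with c show False by (simp add: supp_def)
    qed
  qed
  then show ?thesis using True by (meson finite_SigmaI finite_imageI finite_subset)
next
  case False
  then have "tmul q S T = (\<lambda>_. 0)" unfolding tmul_apply by (auto intro!: ext)
  then show ?thesis by (simp add: supp_def)
qed

lemma supp_tbas: "supp (tbas a b :: 'k::zero_neq_one hq2) = {(a, b)}"
  by (auto simp: supp_def tbas_def)

lemma finite_supp_tpow: "finite (supp (tpow q S k))"
  by (cases k) (simp_all add: finite_supp_tmul supp_tbas)

definition Delta_y :: "'k::field hq2" where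
  "Delta_y = (\<lambda>c. tbas (0, 1) (1, 0) c + tbas (0, 0) (0, 1) c)"

lemma supp_Delta_y: "supp (Delta_y :: 'k::field hq2) = {((0, 1), (1, 0)), ((0, 0), (0, 1))}"
  by (auto simp: supp_def Delta_y_def tbas_def)

lemma tmul_Delta_y:
  fixes S :: "'k::field hq2"
  assumes "finite (supp S)"
  shows "tmul q S Delta_y ((a, i), (b, j)) =
     (if 1 \<le> i then S ((a, i - 1), (b - 1, j)) * q ^ j else 0) + (if 1 \<le> j then S ((a, i), (b, j - 1)) else 0)"
proof -
  have summand: "(\<Sum>r\<in>supp Delta_y.
       if iadd (fst p) (fst r) = (a, i) \<and> iadd (snd p) (snd r) = (b, j)
       then S p * Delta_y r * tw q (fst p) (fst r) * tw q (snd p) (snd r) else 0)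
     = (if p = ((a, i - 1), (b - 1, j)) then (if 1 \<le> i then S p * q ^ j else 0) else 0)
       + (if p = ((a, i), (b, j - 1)) then (if 1 \<le> j then S p else 0) else 0)" for p
  proof -
    obtain x1 y1 x2 y2 where p: "p = ((x1, y1), (x2, y2))" by (metis prod.exhaust)
    show ?thesis unfolding supp_Delta_y p by (auto simp: iadd_def tw_def Delta_y_def tbas_def)
  qed
  show ?thesis
    unfolding tmul_apply fst_conv snd_conv summand sum.distrib
    using assms by (simp add: sum.delta supp_def)
qed

lemma tpow_Delta_y_nonzero:
  "tpow q (Delta_y :: 'k::field hq2) k c \<noteq> 0 \<Longrightarrow>
     fst (fst c) = 0 \<and> fst (snd c) = int (snd (fst c)) \<and> snd (fst c) + snd (snd c) = k"
proof (induction k arbitrary: c)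
  case 0
  then show ?case by (auto simp: tbas_def split: if_splits)
next
  case (Suc k)
  obtain a i b j where c: "c = ((a, i), (b, j))" by (metis prod.exhaust)
  have "tmul q (tpow q Delta_y k) Delta_y ((a, i), (b, j)) \<noteq> 0" using Suc.prems c by simp
  then have "1 \<le> i \<and> tpow q Delta_y k ((a, i - 1), (b - 1, j)) \<noteq> 0
      \<or> 1 \<le> j \<and> tpow q Delta_y k ((a, i), (b, j - 1)) \<noteq> 0"
    unfolding tmul_Delta_y[OF finite_supp_tpow] by (auto split: if_splits)
  then show ?case
    using Suc.IH[of "((a, i - 1), (b - 1, j))"] Suc.IH[of "((a, i), (b, j - 1))"] c by auto
qed

lemma tpow_Delta_y_one_tensor_y:
  "tpow q (Delta_y :: 'k::field hq2) k ((0, 0), (0, k)) = 1"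
  by (induction k) (simp_all add: tbas_def tmul_Delta_y[OF finite_supp_tpow])

lemma tpow_Delta_y_q_integer:
  "tpow q (Delta_y :: 'k::field hq2) (Suc k) ((0, 1), (1, k)) = (\<Sum>i<Suc k. q ^ i)"
proof (induction k)
  case 0
  show ?case
    using tmul_Delta_y[OF finite_supp_tpow[of q Delta_y 0], where a=0 and i=1 and b=1 and j=0] by (simp add: tbas_def)
next
  case (Suc k)
  have "tpow q Delta_y (Suc (Suc k)) ((0, 1), (1, Suc k))
      = tpow q Delta_y (Suc k) ((0, 0), (0, Suc k)) * q ^ Suc k + tpow q Delta_y (Suc k) ((0, 1), (1, k))"
    using tmul_Delta_y[OF finite_supp_tpow[of q Delta_y "Suc k"], where a=0 and i=1 and b=1 and j="Suc k"]
    by simp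
  then show ?case using Suc tpow_Delta_y_one_tensor_y[of q "Suc k"] by (simp add: add.commute)
qed

lemma tmul_tbas_grouplike:
  fixes S :: "'k::field hq2"
  assumes "finite (supp S)"
  shows "tmul q (tbas (n, 0) (n, 0)) S ((a, i), (b, j)) = S ((a - n, i), (b - n, j))"
proof -
  have "tmul q (tbas (n, 0) (n, 0)) S ((a, i), (b, j))
      = (\<Sum>r\<in>supp S. if r = ((a - n, i), (b - n, j)) then S r else 0)"
    unfolding tmul_apply supp_tbas
    by (simp only: sum.insert finite.emptyI empty_iff not_False_eq_True sum.empty add_0_right fst_conv snd_conv)
      (rule sum.cong, auto simp: iadd_def tw_def tbas_def prod_eq_iff)
  also have "\<dots> = S ((a - n, i), (b - n, j))" using assms by (simp add: sum.delta supp_def)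
  finally show ?thesis .
qed

lemma Dbas_apply:
  "Dbas q (n, k) ((a, i), (b, j)) = tpow q Delta_y k ((a - n, i), (b - n, j))"
  unfolding Dbas_def Delta_y_def[symmetric] by (simp add: tmul_tbas_grouplike finite_supp_tpow)

lemma Dbas_nonzero:
  "Dbas q b c \<noteq> 0 \<Longrightarrow>
     fst (fst c) = fst b \<and> fst (snd c) = fst b + int (snd (fst c)) \<and> snd (fst c) + snd (snd c) = snd b"
  using tpow_Delta_y_nonzero[of q "snd b"]
  by (cases b, cases c) (force simp: Dbas_apply)

lemma Dbas_grouplike: "Dbas q (n, 0) = tbas (n, 0) (n, 0)"
  by (auto simp: Dbas_apply tbas_def fun_eq_iff)

lemma Dbas_q_integer: "Dbas q (n, Suc k) ((n, 1), (n + 1, k)) = (\<Sum>i<Suc k. q ^ i)"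
  unfolding Dbas_apply using tpow_Delta_y_q_integer[of q k] by (simp del: tpow.simps)

lemma q_integer_nonzero:
  fixes q :: "'k::field"
  assumes "\<forall>n::nat. n > 0 \<longrightarrow> q ^ n \<noteq> 1"
  shows "(\<Sum>i<Suc k. q ^ i) \<noteq> 0"
  using one_diff_power_eq[of q "Suc k"] assms by auto

lemma supp_bas: "supp (bas b :: 'k::zero_neq_one hq) = {b}"
  by (auto simp: supp_def bas_def)

lemma bas_Hsp: "bas b \<in> (Hsp :: 'k::zero_neq_one hq set)"
  by (simp add: Hsp_def supp_bas)

lemma Hsp_add:
  assumes "f \<in> Hsp" "g \<in> Hsp"
  shows "(\<lambda>b. f b + g b) \<in> (Hsp :: 'k::monoid_add hq set)"
proof -
  have "supp (\<lambda>b. f b + g b) \<subseteq> supp f \<union> supp g" by (auto simp: supp_def)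
  with assms show ?thesis using finite_subset by (auto simp: Hsp_def)
qed

lemma Hsp_smul:
  assumes "f \<in> Hsp"
  shows "(\<lambda>b. a * f b) \<in> (Hsp :: 'k::mult_zero hq set)"
proof -
  have "supp (\<lambda>b. a * f b) \<subseteq> supp f" by (auto simp: supp_def)
  with assms show ?thesis using finite_subset by (auto simp: Hsp_def)
qed

lemma sum_bas_apply:
  "finite A \<Longrightarrow> (\<Sum>b\<in>A. a b * (bas b c :: 'k::semiring_1)) = (if c \<in> A then a c else 0)"
  by (simp add: bas_def if_distrib sum.delta' cong: if_cong)

lemma sum_bas_Hsp:
  assumes "finite A"
  shows "(\<lambda>c. \<Sum>b\<in>A. a b * bas b c) \<in> (Hsp :: 'k::semiring_1 hq set)"
proof -
  have "supp (\<lambda>c. \<Sum>b\<in>A. a b * (bas b c :: 'k)) \<subseteq> A"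
    by (auto simp: supp_def sum_bas_apply[OF assms] split: if_splits)
  with assms show ?thesis using finite_subset by (auto simp: Hsp_def)
qed

lemma Hsp_bas_expansion: "f \<in> Hsp \<Longrightarrow> f = (\<lambda>c. \<Sum>b\<in>supp f. f b * (bas b c :: 'k::semiring_1))"
  by (auto simp: sum_bas_apply Hsp_def supp_def)

lemma klinear_add: "klinear \<phi> \<Longrightarrow> f \<in> Hsp \<Longrightarrow> g \<in> Hsp \<Longrightarrow> \<phi> (\<lambda>b. f b + g b) = (\<lambda>b. \<phi> f b + \<phi> g b)"
  by (simp add: klinear_def)

lemma klinear_smul: "klinear \<phi> \<Longrightarrow> f \<in> Hsp \<Longrightarrow> \<phi> (\<lambda>b. a * f b) = (\<lambda>b. a * \<phi> f b)"
  by (simp add: klinear_def)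

lemma klinear_zero: "klinear \<phi> \<Longrightarrow> \<phi> (\<lambda>_. 0) = (\<lambda>_. 0)"
  using klinear_smul[of \<phi> "\<lambda>_. 0" 0] by (simp add: Hsp_def supp_def)

lemma klinear_sum_bas:
  assumes "klinear \<phi>" "finite A"
  shows "\<phi> (\<lambda>c. \<Sum>b\<in>A. a b * bas b c) = (\<lambda>c. \<Sum>b\<in>A. a b * \<phi> (bas b) c)"
  using assms(2)
proof (induction A rule: finite_induct)
  case empty
  then show ?case using klinear_zero[OF assms(1)] by simp
next
  case (insert x F)
  have "\<phi> (\<lambda>c. \<Sum>b\<in>insert x F. a b * bas b c)
      = \<phi> (\<lambda>c. (\<lambda>c. a x * bas x c) c + (\<lambda>c. \<Sum>b\<in>F. a b * bas b c) c)"
    using insert by simp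
  also have "\<dots> = (\<lambda>c. a x * \<phi> (bas x) c + (\<Sum>b\<in>F. a b * \<phi> (bas b) c))"
    using insert klinear_add[OF assms(1) Hsp_smul[OF bas_Hsp] sum_bas_Hsp[OF insert(1)]]
      klinear_smul[OF assms(1) bas_Hsp] by simp
  finally show ?case using insert by simp
qed

lemma klinear_expansion:
  assumes "klinear \<phi>" and "f \<in> Hsp"
  shows "\<phi> f = (\<lambda>c. \<Sum>b\<in>supp f. f b * \<phi> (bas b) c)"
proof -
  have "\<phi> f = \<phi> (\<lambda>c. \<Sum>b\<in>supp f. f b * bas b c)"
    using Hsp_bas_expansion[OF assms(2)] by (rule arg_cong)
  also have "\<dots> = (\<lambda>c. \<Sum>b\<in>supp f. f b * \<phi> (bas b) c)"
    using klinear_sum_bas[OF assms(1)] assms(2) by (simp add: Hsp_def)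
  finally show ?thesis .
qed

lemma Delta_bas: "Delta q (bas b) = Dbas q b"
  unfolding Delta_def supp_bas by (simp add: bas_def)

lemma finite_supp_Delta: "finite (supp (Delta q f))"
proof (cases "finite (supp f)")
  case True
  have "supp (Delta q f) \<subseteq> (\<Union>b\<in>supp f. supp (Dbas q b))"
  proof
    fix c assume "c \<in> supp (Delta q f)"
    then have "(\<Sum>b\<in>supp f. f b * Dbas q b c) \<noteq> 0" by (simp add: supp_def Delta_def)
    then obtain b where b: "b \<in> supp f" and "f b * Dbas q b c \<noteq> 0"
      by (rule sum.not_neutral_contains_not_neutral)
    then have "c \<in> supp (Dbas q b)" by (simp add: supp_def)
    with b show "c \<in> (\<Union>b\<in>supp f. supp (Dbas q b))" by (rule UN_I)
  qed
  moreover have "finite (\<Union>b\<in>supp f. supp (Dbas q b))"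
    using True by (simp add: Dbas_def finite_supp_tmul)
  ultimately show ?thesis by (rule finite_subset)
next
  case False
  then show ?thesis by (simp add: Delta_def supp_def)
qed

lemma tmap_apply:
  "tmap \<phi> T c = (\<Sum>p\<in>supp T. T p * \<phi> (bas (fst p)) (fst c) * \<phi> (bas (snd p)) (snd c))"
  unfolding tmap_def split_def prod.collapse ..

lemma tmap_tbas: "tmap \<phi> (tbas a b :: 'k::field hq2) c = \<phi> (bas a) (fst c) * \<phi> (bas b) (snd c)"
  unfolding tmap_apply supp_tbas by (simp add: tbas_def)

lemma tmap_id:
  assumes "finite (supp T)" and "\<And>b. \<phi> (bas b) = bas b"
  shows "tmap \<phi> T = T"
proof
  fix c
  have "tmap \<phi> T c = (\<Sum>p\<in>supp T. if p = c then T p else 0)"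
    unfolding tmap_apply assms(2) by (rule sum.cong) (auto simp: bas_def prod_eq_iff)
  also have "\<dots> = T c" using assms(1) by (simp add: sum.delta' supp_def)
  finally show "tmap \<phi> T c = T c" .
qed

text \<open>This is \<open>(\<phi> \<otimes> \<phi>)(u \<otimes> v) = \<phi> u \<otimes> \<phi> v\<close>, with \<open>u \<otimes> v\<close> expanded over any finite
  superset of its support.\<close>
lemma tmap_tensor:
  assumes "klinear \<phi>" and u: "u \<in> Hsp" and v: "v \<in> Hsp"
    and B: "finite B" "supp u \<times> supp v \<subseteq> B"
  shows "(\<Sum>r\<in>B. u (fst r) * v (snd r) * \<phi> (bas (fst r)) c1 * \<phi> (bas (snd r)) c2)
       = \<phi> u c1 * \<phi> v c2"
proof -
  have "(\<Sum>r\<in>B. u (fst r) * v (snd r) * \<phi> (bas (fst r)) c1 * \<phi> (bas (snd r)) c2)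
      = (\<Sum>r\<in>supp u \<times> supp v. u (fst r) * v (snd r) * \<phi> (bas (fst r)) c1 * \<phi> (bas (snd r)) c2)"
    by (rule sum.mono_neutral_right[OF B(1) B(2)]) (auto simp: supp_def)
  also have "\<dots> = (\<Sum>x\<in>supp u. u x * \<phi> (bas x) c1) * (\<Sum>y\<in>supp v. v y * \<phi> (bas y) c2)"
    unfolding sum_product sum.cartesian_product by (rule sum.cong) (auto simp: mult_ac)
  also have "\<dots> = \<phi> u c1 * \<phi> v c2"
    by (simp only: klinear_expansion[OF assms(1) u] klinear_expansion[OF assms(1) v])
  finally show ?thesis .
qed

lemma tmap_tmap:
  assumes \<phi>: "klinear \<phi>" and \<chi>: "\<And>b. \<chi> (bas b) \<in> Hsp" and T: "finite (supp T)"
    and \<psi>: "\<And>b. \<psi> (bas b) = \<phi> (\<chi> (bas b))"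
  shows "tmap \<phi> (tmap \<chi> T) = tmap \<psi> T"
proof
  fix c
  define B where "B = (\<Union>p\<in>supp T. supp (\<chi> (bas (fst p))) \<times> supp (\<chi> (bas (snd p))))"
  have finB: "finite B" using \<chi> T by (simp add: B_def Hsp_def)
  have "supp (tmap \<chi> T) \<subseteq> B"
  proof
    fix r assume "r \<in> supp (tmap \<chi> T)"
    then have "(\<Sum>p\<in>supp T. T p * \<chi> (bas (fst p)) (fst r) * \<chi> (bas (snd p)) (snd r)) \<noteq> 0"
      by (simp add: supp_def tmap_apply)
    then obtain p where p: "p \<in> supp T"
      and "T p * \<chi> (bas (fst p)) (fst r) * \<chi> (bas (snd p)) (snd r) \<noteq> 0"
      by (rule sum.not_neutral_contains_not_neutral)
    then have "r \<in> supp (\<chi> (bas (fst p))) \<times> supp (\<chi> (bas (snd p)))"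
      by (simp add: supp_def mem_Times_iff)
    with p show "r \<in> B" unfolding B_def by (rule UN_I)
  qed
  have inner: "(\<Sum>r\<in>B. \<chi> (bas (fst p)) (fst r) * (\<chi> (bas (snd p)) (snd r)
        * (\<phi> (bas (fst r)) (fst c) * \<phi> (bas (snd r)) (snd c))))
      = \<phi> (\<chi> (bas (fst p))) (fst c) * \<phi> (\<chi> (bas (snd p))) (snd c)" if "p \<in> supp T" for p
  proof -
    have "supp (\<chi> (bas (fst p))) \<times> supp (\<chi> (bas (snd p))) \<subseteq> B" using that by (auto simp: B_def)
    from tmap_tensor[OF \<phi> \<chi> \<chi> finB this] show ?thesis by (simp only: mult.assoc)
  qed
  have "tmap \<phi> (tmap \<chi> T) c
      = (\<Sum>r\<in>B. tmap \<chi> T r * \<phi> (bas (fst r)) (fst c) * \<phi> (bas (snd r)) (snd c))"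
    unfolding tmap_apply[of \<phi>]
    by (rule sum.mono_neutral_left[OF finB \<open>supp (tmap \<chi> T) \<subseteq> B\<close>]) (simp add: supp_def)
  also have "\<dots> = (\<Sum>r\<in>B. \<Sum>p\<in>supp T. T p * (\<chi> (bas (fst p)) (fst r) * (\<chi> (bas (snd p)) (snd r)
        * (\<phi> (bas (fst r)) (fst c) * \<phi> (bas (snd r)) (snd c)))))"
    unfolding tmap_apply[of \<chi>] by (simp only: sum_distrib_right mult.assoc)
  also have "\<dots> = (\<Sum>p\<in>supp T. T p * (\<Sum>r\<in>B. \<chi> (bas (fst p)) (fst r) * (\<chi> (bas (snd p)) (snd r)
        * (\<phi> (bas (fst r)) (fst c) * \<phi> (bas (snd r)) (snd c)))))"
    by (subst sum.swap) (simp only: sum_distrib_left)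
  also have "\<dots> = (\<Sum>p\<in>supp T. T p * (\<phi> (\<chi> (bas (fst p))) (fst c) * \<phi> (\<chi> (bas (snd p))) (snd c)))"
    by (rule sum.cong[OF refl]) (simp only: inner)
  also have "\<dots> = tmap \<psi> T c" unfolding tmap_apply \<psi> by (simp only: mult.assoc)
  finally show "tmap \<phi> (tmap \<chi> T) c = tmap \<psi> T c" .
qed

section \<open>The group of coalgebra automorphisms\<close>

lemma AutcD:
  assumes "\<phi> \<in> Autc q"
  shows Autc_Bij: "\<phi> \<in> Bij Hsp" and Autc_klinear: "klinear \<phi>"
    and Autc_Delta: "f \<in> Hsp \<Longrightarrow> Delta q (\<phi> f) = tmap \<phi> (Delta q f)"
    and Autc_eps: "f \<in> Hsp \<Longrightarrow> eps (\<phi> f) = eps f"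
    and Autc_Hsp: "f \<in> Hsp \<Longrightarrow> \<phi> f \<in> Hsp"
  using assms Bij_imp_funcset by (auto simp: Autc_def)

lemma id_Autc: "(\<lambda>f\<in>Hsp. f) \<in> Autc q"
  unfolding Autc_def
proof (intro CollectI conjI ballI)
  show "(\<lambda>f\<in>Hsp. f) \<in> Bij Hsp" by (rule id_Bij)
  show "klinear (\<lambda>f\<in>Hsp. f)" by (simp add: klinear_def Hsp_add Hsp_smul)
  fix f :: "'a hq" assume "f \<in> Hsp"
  then show "Delta q ((\<lambda>f\<in>Hsp. f) f) = tmap (\<lambda>f\<in>Hsp. f) (Delta q f)"
    and "eps ((\<lambda>f\<in>Hsp. f) f) = eps f"
    by (simp_all add: tmap_id finite_supp_Delta bas_Hsp)
qed

lemma compose_Autc: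
  assumes \<phi>: "\<phi> \<in> Autc q" and \<chi>: "\<chi> \<in> Autc q"
  shows "compose Hsp \<phi> \<chi> \<in> Autc q"
  unfolding Autc_def
proof (intro CollectI conjI ballI)
  note L = Autc_klinear[OF \<phi>] Autc_klinear[OF \<chi>]
  show "compose Hsp \<phi> \<chi> \<in> Bij Hsp" by (rule compose_Bij[OF Autc_Bij[OF \<phi>] Autc_Bij[OF \<chi>]])
  show "klinear (compose Hsp \<phi> \<chi>)"
    unfolding klinear_def compose_def
    by (simp add: Hsp_add Hsp_smul klinear_add[OF L(1)] klinear_add[OF L(2)]
        klinear_smul[OF L(1)] klinear_smul[OF L(2)] Autc_Hsp[OF \<chi>])
  fix f :: "'a hq" assume f: "f \<in> Hsp"
  have "Delta q (\<phi> (\<chi> f)) = tmap \<phi> (tmap \<chi> (Delta q f))"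
    using Autc_Delta[OF \<phi> Autc_Hsp[OF \<chi> f]] Autc_Delta[OF \<chi> f] by simp
  also have "\<dots> = tmap (compose Hsp \<phi> \<chi>) (Delta q f)"
    by (rule tmap_tmap[where \<chi> = \<chi>, OF L(1) Autc_Hsp[OF \<chi> bas_Hsp] finite_supp_Delta])
      (simp add: compose_def bas_Hsp)
  finally show "Delta q (compose Hsp \<phi> \<chi> f) = tmap (compose Hsp \<phi> \<chi>) (Delta q f)"
    using f by (simp add: compose_def)
  show "eps (compose Hsp \<phi> \<chi> f) = eps f"
    using f by (simp add: compose_def Autc_eps[OF \<phi>] Autc_eps[OF \<chi>] Autc_Hsp[OF \<chi>])
qed

lemma inv_Autc:
  assumes \<phi>: "\<phi> \<in> Autc q"
  shows "(\<lambda>g\<in>Hsp. inv_into Hsp \<phi> g) \<in> Autc q"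
  unfolding Autc_def
proof (intro CollectI conjI ballI)
  let ?\<psi> = "\<lambda>g\<in>Hsp. inv_into Hsp \<phi> g"
  have \<psi>_Hsp: "?\<psi> g \<in> Hsp" and \<phi>_\<psi>: "\<phi> (?\<psi> g) = g" if "g \<in> Hsp" for g
    using Autc_Bij[OF \<phi>] that by (auto simp: Bij_def bij_betw_def inv_into_into f_inv_into_f)
  have \<psi>_\<phi>: "?\<psi> (\<phi> f) = f" if "f \<in> Hsp" for f
    using Autc_Bij[OF \<phi>] that Autc_Hsp[OF \<phi> that] by (auto simp: Bij_def bij_betw_def)
  note L = Autc_klinear[OF \<phi>]
  show "?\<psi> \<in> Bij Hsp" by (rule restrict_inv_into_Bij[OF Autc_Bij[OF \<phi>]])
  show L\<psi>: "klinear ?\<psi>"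
    unfolding klinear_def
  proof (intro conjI ballI allI)
    fix f g :: "'a hq" and a assume f: "f \<in> Hsp" and g: "g \<in> Hsp"
    have "\<phi> (\<lambda>b. ?\<psi> f b + ?\<psi> g b) = (\<lambda>b. f b + g b)"
      by (simp only: klinear_add[OF L \<psi>_Hsp[OF f] \<psi>_Hsp[OF g]] \<phi>_\<psi>[OF f] \<phi>_\<psi>[OF g])
    then show "?\<psi> (\<lambda>b. f b + g b) = (\<lambda>b. ?\<psi> f b + ?\<psi> g b)"
      using \<psi>_\<phi>[OF Hsp_add[OF \<psi>_Hsp[OF f] \<psi>_Hsp[OF g]]] f g by simp
    have "\<phi> (\<lambda>b. a * ?\<psi> f b) = (\<lambda>b. a * f b)"
      by (simp only: klinear_smul[OF L \<psi>_Hsp[OF f]] \<phi>_\<psi>[OF f])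
    then show "?\<psi> (\<lambda>b. a * f b) = (\<lambda>b. a * ?\<psi> f b)"
      using \<psi>_\<phi>[OF Hsp_smul[OF \<psi>_Hsp[OF f], of a]] f by simp
  qed
  fix g :: "'a hq" assume g: "g \<in> Hsp"
  have "tmap ?\<psi> (Delta q g) = tmap ?\<psi> (tmap \<phi> (Delta q (?\<psi> g)))"
    using Autc_Delta[OF \<phi> \<psi>_Hsp[OF g]] \<phi>_\<psi>[OF g] by simp
  also have "\<dots> = tmap (\<lambda>f. f) (Delta q (?\<psi> g))"
    by (rule tmap_tmap[where \<chi> = \<phi>, OF L\<psi> Autc_Hsp[OF \<phi> bas_Hsp] finite_supp_Delta]) (simp only: \<psi>_\<phi>[OF bas_Hsp])
  also have "\<dots> = Delta q (?\<psi> g)" by (rule tmap_id[OF finite_supp_Delta]) simp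
  finally show "Delta q (?\<psi> g) = tmap ?\<psi> (Delta q g)" ..
  show "eps (?\<psi> g) = eps g"
    using Autc_eps[OF \<phi> \<psi>_Hsp[OF g]] \<phi>_\<psi>[OF g] by simp
qed

lemma subgroup_Autc: "subgroup (Autc q) (BijGroup Hsp)"
proof (rule group.subgroupI[OF group_BijGroup])
  show "Autc q \<subseteq> carrier (BijGroup Hsp)" by (auto simp: BijGroup_def Autc_def)
  show "Autc q \<noteq> {}" using id_Autc by blast
  fix \<phi> \<chi> assume \<phi>: "\<phi> \<in> Autc q" and \<chi>: "\<chi> \<in> Autc q"
  show "inv\<^bsub>BijGroup Hsp\<^esub> \<phi> \<in> Autc q"
    using inv_BijGroup[OF Autc_Bij[OF \<phi>]] inv_Autc[OF \<phi>] by simp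
  show "\<phi> \<otimes>\<^bsub>BijGroup Hsp\<^esub> \<chi> \<in> Autc q"
    using compose_Autc[OF \<phi> \<chi>] Autc_Bij[OF \<phi>] Autc_Bij[OF \<chi>] by (simp add: BijGroup_def)
qed

section \<open>Coalgebra automorphisms preserve the y-degree filtration\<close>

lemma Hle_Hsp: "Hle m \<subseteq> Hsp"
  by (auto simp: Hle_def)

lemma Hle_eq_zero: "f \<in> Hle m \<Longrightarrow> m < snd b \<Longrightarrow> f b = 0"
  by (cases b) (simp add: Hle_def)

lemma obtain_top_degree:
  fixes g :: "'k::field hq"
  assumes "g \<in> Hsp" and "g \<notin> Hle m"
  obtains e where "g e \<noteq> 0" "m < snd e" "\<And>b. g b \<noteq> 0 \<Longrightarrow> snd b \<le> snd e"
proof -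
  obtain d where d: "m < snd d" "g d \<noteq> 0" using assms by (auto simp: Hle_def)
  let ?top = "Max (snd ` supp g)"
  have fin: "finite (snd ` supp g)" using assms(1) by (simp add: Hsp_def)
  have "snd d \<in> snd ` supp g" using d(2) by (simp add: supp_def)
  then have "?top \<in> snd ` supp g" and d_top: "snd d \<le> ?top" using fin by (auto intro: Max_in)
  then obtain e where e: "e \<in> supp g" "snd e = ?top" by auto
  show ?thesis
  proof (rule that)
    show "g e \<noteq> 0" using e(1) by (simp add: supp_def)
    show "m < snd e" using d(1) d_top e(2) by linarith
    show "snd b \<le> snd e" if "g b \<noteq> 0" for b using fin that e(2) by (simp add: supp_def)
  qed
qed

lemma Delta_top_coefficient:
  assumes g: "g \<in> Hsp" and e: "snd e = Suc k" and top: "\<And>b. g b \<noteq> 0 \<Longrightarrow> snd b \<le> snd e"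
  shows "Delta q g ((fst e, 1), (fst e + 1, k)) = g e * (\<Sum>i<Suc k. q ^ i)"
proof -
  let ?c = "((fst e, 1), (fst e + 1, k))"
  have "Delta q g ?c = (\<Sum>b\<in>supp g. if b = e then g b * Dbas q b ?c else 0)"
    unfolding Delta_def
  proof (rule sum.cong[OF refl])
    fix b assume "b \<in> supp g"
    then have "snd b \<le> snd e" using top by (simp add: supp_def)
    then have "b = e" if "Dbas q b ?c \<noteq> 0"
      using Dbas_nonzero[OF that] e by (auto simp: prod_eq_iff)
    then show "g b * Dbas q b ?c = (if b = e then g b * Dbas q b ?c else 0)" by auto
  qed
  also have "\<dots> = g e * Dbas q e ?c"
    using g by (cases "g e = 0") (simp_all add: Hsp_def supp_def sum.delta')
  also have "Dbas q e ?c = (\<Sum>i<Suc k. q ^ i)"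
    using Dbas_q_integer[of q "fst e" k] e by (metis prod.collapse)
  finally show ?thesis .
qed

lemma Autc_grouplike_Hle_0:
  assumes \<phi>: "\<phi> \<in> Autc q"
  shows "\<phi> (bas (n, 0)) \<in> Hle 0"
proof (rule ccontr)
  define g where "g = \<phi> (bas (n, 0))"
  have g: "g \<in> Hsp" unfolding g_def by (rule Autc_Hsp[OF \<phi> bas_Hsp])
  assume "\<phi> (bas (n, 0)) \<notin> Hle 0"
  then obtain e where e: "g e \<noteq> 0" "0 < snd e" and top: "\<And>b. g b \<noteq> 0 \<Longrightarrow> snd b \<le> snd e"
    using obtain_top_degree[OF g] unfolding g_def by blast
  have "Delta q g = tmap \<phi> (tbas (n, 0) (n, 0))"
    unfolding g_def Autc_Delta[OF \<phi> bas_Hsp] Delta_bas Dbas_grouplike ..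
  then have "Delta q g (e, e) = g e * g e" by (simp add: tmap_tbas g_def)
  moreover have "Delta q g (e, e) = 0"
    unfolding Delta_def
  proof (intro sum.neutral ballI)
    fix b assume "b \<in> supp g"
    then have "snd b \<le> snd e" using top by (simp add: supp_def)
    then have "Dbas q b (e, e) = 0" using Dbas_nonzero[of q b "(e, e)"] e(2) by auto
    then show "g b * Dbas q b (e, e) = 0" by simp
  qed
  ultimately show False using e(1) by simp
qed

lemma Autc_bas_Hle_Suc:
  fixes q :: "'k::field"
  assumes q: "\<forall>n::nat. n > 0 \<longrightarrow> q ^ n \<noteq> 1"
    and \<phi>: "\<phi> \<in> Autc q"
    and IH: "\<And>b. snd b \<le> m \<Longrightarrow> \<phi> (bas b) \<in> Hle m"
    and b: "snd b \<le> Suc m"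
  shows "\<phi> (bas b) \<in> Hle (Suc m)"
proof (rule ccontr)
  define g where "g = \<phi> (bas b)"
  have g: "g \<in> Hsp" unfolding g_def by (rule Autc_Hsp[OF \<phi> bas_Hsp])
  assume "\<phi> (bas b) \<notin> Hle (Suc m)"
  then obtain e where e: "g e \<noteq> 0" "Suc m < snd e" and top: "\<And>b. g b \<noteq> 0 \<Longrightarrow> snd b \<le> snd e"
    using obtain_top_degree[OF g] unfolding g_def by blast
  obtain k where k: "snd e = Suc k" "m < k" using e(2) by (cases "snd e") auto
  let ?c = "((fst e, 1 :: nat), (fst e + 1, k))"
  have "Delta q g ?c \<noteq> 0"
    using Delta_top_coefficient[OF g k(1) top] e(1) q_integer_nonzero[OF q] by simp
  moreover have "Delta q g ?c = 0"
  proof -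
    have "Delta q g ?c
        = (\<Sum>p\<in>supp (Dbas q b). Dbas q b p * \<phi> (bas (fst p)) (fst ?c) * \<phi> (bas (snd p)) (snd ?c))"
      unfolding g_def Autc_Delta[OF \<phi> bas_Hsp] Delta_bas tmap_apply ..
    also have "\<dots> = 0"
    proof (intro sum.neutral ballI)
      fix p assume "p \<in> supp (Dbas q b)"
      then have "snd (fst p) + snd (snd p) \<le> Suc m"
        using Dbas_nonzero[of q b p] b by (simp add: supp_def)
      then have "\<phi> (bas (fst p)) (fst ?c) = 0 \<or> \<phi> (bas (snd p)) (snd ?c) = 0"
      proof (cases "snd (fst p)")
        case 0
        then have "\<phi> (bas (fst p)) \<in> Hle 0"
          using Autc_grouplike_Hle_0[OF \<phi>, of "fst (fst p)"] by (metis prod.collapse)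
        then show ?thesis by (simp add: Hle_def)
      next
        case Suc
        with \<open>snd (fst p) + snd (snd p) \<le> Suc m\<close> have "\<phi> (bas (snd p)) \<in> Hle m" by (intro IH) simp
        then show ?thesis using k(2) by (simp add: Hle_def)
      qed
      then show "Dbas q b p * \<phi> (bas (fst p)) (fst ?c) * \<phi> (bas (snd p)) (snd ?c) = 0" by auto
    qed
    finally show ?thesis .
  qed
  ultimately show False by simp
qed

lemma Autc_bas_Hle:
  fixes q :: "'k::field"
  assumes "\<forall>n::nat. n > 0 \<longrightarrow> q ^ n \<noteq> 1" and "\<phi> \<in> Autc q" and "snd b \<le> m"
  shows "\<phi> (bas b) \<in> Hle m"
  using assms(3)
proof (induction m arbitrary: b)
  case 0
  then obtain n where "b = (n, 0)" by (cases b) simp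
  then show ?case using Autc_grouplike_Hle_0[OF assms(2)] by simp
next
  case (Suc m)
  then show ?case using Autc_bas_Hle_Suc[OF assms(1,2)] by blast
qed

lemma Autc_Hle:
  fixes q :: "'k::field"
  assumes q: "\<forall>n::nat. n > 0 \<longrightarrow> q ^ n \<noteq> 1" and \<phi>: "\<phi> \<in> Autc q" and h: "h \<in> Hle m"
  shows "\<phi> h \<in> Hle m"
proof -
  have hH: "h \<in> Hsp" using h by (simp add: Hle_def)
  have "\<phi> h c = 0" if "m < snd c" for c
    unfolding klinear_expansion[OF Autc_klinear[OF \<phi>] hH]
  proof (intro sum.neutral ballI)
    fix b assume "b \<in> supp h"
    then have "h b \<noteq> 0" by (simp add: supp_def)
    then have "snd b \<le> m" using Hle_eq_zero[OF h] not_le by blast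
    then have "\<phi> (bas b) \<in> Hle m" by (rule Autc_bas_Hle[OF q \<phi>])
    then show "h b * \<phi> (bas b) c = 0" using Hle_eq_zero that by fastforce
  qed
  then show ?thesis using Autc_Hsp[OF \<phi> hH] by (simp add: Hle_def)
qed

theorem lemma3p1:
  fixes q :: "'k::field"
  assumes "q \<noteq> 0"
    and "\<forall>n::nat. n > 0 \<longrightarrow> q ^ n \<noteq> 1"
  shows "(\<forall>m::nat. m \<ge> 1 \<longrightarrow> Autm q m \<lhd> AutcGroup q)
       \<and> Autm q 1 \<subseteq> Aut0 q
       \<and> (\<forall>m::nat. m \<ge> 1 \<longrightarrow> Autm q (Suc m) \<subseteq> Autm q m)"
proof (intro conjI allI impI)
  fix m :: nat
  show "Autm q m \<lhd> AutcGroup q"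
    unfolding Autm_def AutcGroup_def
    by (rule normal_pointwise_stabilizer[OF subgroup_Autc Hle_Hsp]) (rule Autc_Hle[OF assms(2)])
next
  have "bas (0, 0) \<in> (Hle 1 :: 'k hq set)"
    using bas_Hsp[of "(0, 0)"] by (simp add: Hle_def bas_def)
  then show "Autm q 1 \<subseteq> Aut0 q" by (auto simp: Autm_def Aut0_def)
next
  fix m :: nat
  show "Autm q (Suc m) \<subseteq> Autm q m" by (auto simp: Autm_def Hle_def)
qed

end
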